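(* Assume (A1)–(A3) below, suppose the Wald estimands $\mathrm{Wald}_1,\dots,\mathrm{Wald}_L$ are distinct, and suppose the EGMM pseudo-true value $\beta^*_{EGMM}$ is unique. For any $\omega\in\Delta^{L-1}$ with $\omega\ne\lambda^{EGMM}$, the weighting matrix $W=\Omega_\omega^{-1}$, which achieves the floor $V_{floor}(\omega)=1/(\boldsymbol\gamma'\Omega_\omega^{-1}\boldsymbol\gamma)$, fails to deliver the target weights: $\lambda(\Omega_\omega^{-1})\ne\omega$. Consequently any positive definite $W$ with $\lambda(W)=\omega$ satisfies $V(W;\Omega_\omega)>V_{floor}(\omega)$. The target $\omega=\lambda^{EGMM}$ is the unique target for which the floor is achievable.
   Context: Observe i.i.d. $(Y_i,D_i,\mathbf Z_i)$, $Y_i\in\mathbb R$, $D_i\in\{0,1\}$, $\mathbf Z_i\in\{0,1\}^L$, $L\ge2$; potential outcomes $Y_i(0),Y_i(1)$, compliance type $D_i(\cdot):\{0,1\}^L\to\{0,1\}$, $D_i=D_i(\mathbf Z_i)$, $Y_i=D_iY_i(1)+(1-D_i)Y_i(0)$. $p_\ell=P(Z_{\ell i}=1)$, $\pi_\ell,\rho_\ell$ the differences of $\mathbb E[D_i\mid Z_{\ell i}=z]$, $\mathbb E[Y_i\mid Z_{\ell i}=z]$ between $z=1$ and $0$, $\mathrm{Wald}_\ell=\rho_\ell/\pi_\ell$, $\gamma_\ell=\mathrm{Cov}(D_i,Z_{\ell i})$, $\boldsymbol\gamma=(\gamma_\ell)_\ell$, $\Sigma_Z=\mathrm{Var}(\mathbf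 Z_i)$. $g_i(\beta)$ has entries $(Y_i-\beta D_i)(Z_{\ell i}-p_\ell)$; $\Omega(\beta)=\mathbb E[g_i(\beta)g_i(\beta)']$, taken to be positive definite. $\lambda_\ell(W)=\gamma_\ell[W\boldsymbol\gamma]_\ell/(\boldsymbol\gamma'W\boldsymbol\gamma)$; $\Delta^{L-1}$ the probability simplex in $\mathbb R^L$; $\beta^*(\omega)=\sum_\ell\omega_\ell\mathrm{Wald}_\ell$; $\Omega_\omega=\Omega(\beta^*(\omega))$; $V(W;\Omega)=\boldsymbol\gamma'W\Omega W\boldsymbol\gamma/(\boldsymbol\gamma'W\boldsymbol\gamma)^2$. The EGMM pseudo-true value $\beta^*_{EGMM}$ is a fixed point of $T(\beta)=\sum_\ell\lambda_\ell(\Omega(\beta)^{-1})\mathrm{Wald}_\ell$, and $\lambda^{EGMM}=\lambda(\Omega(\beta^*_{EGMM})^{-1})$. Assumptions: (A1) $(Y_i(0),Y_i(1),D_i(\cdot))$ independent of $\mathbf Z_i$. (A2) $D_i(z)$ nondecreasing in each coordinate for every $i$. (A3) $p_\ell>0$, $\pi_\ell>0$ for all $\ell$; $\Sigma_Z$ positive definite. *)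

theory Defs
  imports "HOL-Probability.Probability"
begin

text \<open>Instruments Z : 'a => 'l => bool (index type 'l finite, L = CARD('l)),
  treatment D and outcome Y as real-valued random variables on the probability space M.\<close>

definition cexp_ev :: "'a measure \<Rightarrow> ('a \<Rightarrow> real) \<Rightarrow> 'a set \<Rightarrow> real" where
  "cexp_ev M f A = (\<integral>x. f x * indicator A x \<partial>M) / measure M A"

definition zev :: "'a measure \<Rightarrow> ('a \<Rightarrow> 'l \<Rightarrow> bool) \<Rightarrow> 'l \<Rightarrow> bool \<Rightarrow> 'a set" where
  "zev M Z l z = {x \<in> space M. Z x l = z}"

definition pZ :: "'a measure \<Rightarrow> ('a \<Rightarrow> 'l \<Rightarrow> bool) \<Rightarrow> 'l \<Rightarrow> real" where
  "pZ M Z l = measure M {x \<in> space M. Z x l}"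

definition piZ :: "'a measure \<Rightarrow> ('a \<Rightarrow> real) \<Rightarrow> ('a \<Rightarrow> 'l \<Rightarrow> bool) \<Rightarrow> 'l \<Rightarrow> real" where
  "piZ M D Z l = cexp_ev M D (zev M Z l True) - cexp_ev M D (zev M Z l False)"

definition rhoZ :: "'a measure \<Rightarrow> ('a \<Rightarrow> real) \<Rightarrow> ('a \<Rightarrow> 'l \<Rightarrow> bool) \<Rightarrow> 'l \<Rightarrow> real" where
  "rhoZ M Y Z l = cexp_ev M Y (zev M Z l True) - cexp_ev M Y (zev M Z l False)"

definition wald :: "'a measure \<Rightarrow> ('a \<Rightarrow> real) \<Rightarrow> ('a \<Rightarrow> real) \<Rightarrow> ('a \<Rightarrow> 'l \<Rightarrow> bool) \<Rightarrow> 'l \<Rightarrow> real" where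
  "wald M Y D Z l = rhoZ M Y Z l / piZ M D Z l"

definition gam :: "'a measure \<Rightarrow> ('a \<Rightarrow> real) \<Rightarrow> ('a \<Rightarrow> 'l::finite \<Rightarrow> bool) \<Rightarrow> real^'l" where
  "gam M D Z = (\<chi> l. (\<integral>x. D x * of_bool (Z x l) \<partial>M) - (\<integral>x. D x \<partial>M) * pZ M Z l)"

definition SigZ :: "'a measure \<Rightarrow> ('a \<Rightarrow> 'l::finite \<Rightarrow> bool) \<Rightarrow> real^'l^'l" where
  "SigZ M Z = (\<chi> l k. (\<integral>x. of_bool (Z x l) * of_bool (Z x k) \<partial>M) - pZ M Z l * pZ M Z k)"

definition gmom :: "'a measure \<Rightarrow> ('a \<Rightarrow> real) \<Rightarrow> ('a \<Rightarrow> real) \<Rightarrow> ('a \<Rightarrow> 'l::finite \<Rightarrow> bool)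
    \<Rightarrow> real \<Rightarrow> 'a \<Rightarrow> real^'l" where
  "gmom M Y D Z b x = (\<chi> l. (Y x - b * D x) * (of_bool (Z x l) - pZ M Z l))"

definition Omega :: "'a measure \<Rightarrow> ('a \<Rightarrow> real) \<Rightarrow> ('a \<Rightarrow> real) \<Rightarrow> ('a \<Rightarrow> 'l::finite \<Rightarrow> bool)
    \<Rightarrow> real \<Rightarrow> real^'l^'l" where
  "Omega M Y D Z b = (\<chi> l k. \<integral>x. gmom M Y D Z b x $ l * gmom M Y D Z b x $ k \<partial>M)"

definition pos_def :: "real^'n^'n \<Rightarrow> bool" where
  "pos_def A \<longleftrightarrow> transpose A = A \<and> (\<forall>x. x \<noteq> 0 \<longrightarrow> x \<bullet> (A *v x) > 0)"

definition lam :: "real^'l \<Rightarrow> real^'l^'l \<Rightarrow> real^'l" where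
  "lam g W = (\<chi> l. g $ l * (W *v g) $ l / (g \<bullet> (W *v g)))"

definition prob_simplex :: "(real^'l::finite) set" where
  "prob_simplex = {w. (\<forall>l. 0 \<le> w $ l) \<and> (\<Sum>l\<in>UNIV. w $ l) = 1}"

definition betastar :: "('l::finite \<Rightarrow> real) \<Rightarrow> real^'l \<Rightarrow> real" where
  "betastar wd w = (\<Sum>l\<in>UNIV. w $ l * wd l)"

definition Vasy :: "real^'l \<Rightarrow> real^'l^'l \<Rightarrow> real^'l^'l \<Rightarrow> real" where
  "Vasy g W Om = (g \<bullet> ((W ** Om ** W) *v g)) / (g \<bullet> (W *v g))^2"

definition Tmap :: "real^'l \<Rightarrow> (real \<Rightarrow> real^'l^'l) \<Rightarrow> ('l::finite \<Rightarrow> real) \<Rightarrow> real \<Rightarrow> real" where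
  "Tmap g Om wd b = (\<Sum>l\<in>UNIV. lam g (matrix_inv (Om b)) $ l * wd l)"

definition Dobs :: "('a \<Rightarrow> ('l \<Rightarrow> bool) \<Rightarrow> bool) \<Rightarrow> ('a \<Rightarrow> 'l \<Rightarrow> bool) \<Rightarrow> 'a \<Rightarrow> real" where
  "Dobs Dc Z x = of_bool (Dc x (Z x))"

definition Yobs :: "('a \<Rightarrow> real) \<Rightarrow> ('a \<Rightarrow> real) \<Rightarrow> ('a \<Rightarrow> ('l \<Rightarrow> bool) \<Rightarrow> bool)
    \<Rightarrow> ('a \<Rightarrow> 'l \<Rightarrow> bool) \<Rightarrow> 'a \<Rightarrow> real" where
  "Yobs Y0 Y1 Dc Z x = Dobs Dc Z x * Y1 x + (1 - Dobs Dc Z x) * Y0 x"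

text \<open>Independence of two random elements with possibly different value types
  (library indep_var requires a common type): joint law factorises on all measurable rectangles.\<close>
definition indep2 :: "'a measure \<Rightarrow> 'b measure \<Rightarrow> ('a \<Rightarrow> 'b) \<Rightarrow> 'c measure \<Rightarrow> ('a \<Rightarrow> 'c) \<Rightarrow> bool" where
  "indep2 M Ma X Mb Z \<longleftrightarrow> X \<in> M \<rightarrow>\<^sub>M Ma \<and> Z \<in> M \<rightarrow>\<^sub>M Mb \<and>
     (\<forall>A\<in>sets Ma. \<forall>B\<in>sets Mb.
        measure M {x \<in> space M. X x \<in> A \<and> Z x \<in> B}
          = measure M {x \<in> space M. X x \<in> A} * measure M {x \<in> space M. Z x \<in> B})"

end

theory Submission
  imports Defs
begin

text \<open>For positive definite \<open>\<Omega>\<close> and symmetric \<open>W\<close>, put \<open>a = W\<gamma>\<close> and \<open>b = \<Omega>\<inverse>\<gamma>\<close>. Then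
  \<open>V(W;\<Omega>) = \<langle>a,a\<rangle>/\<langle>a,b\<rangle>\<^sup>2\<close> and \<open>1/(\<gamma>'\<Omega>\<inverse>\<gamma>) = 1/\<langle>b,b\<rangle>\<close> in the inner product \<open>\<langle>x,y\<rangle> = x'\<Omega>y\<close>, so
  by Cauchy-Schwarz the floor is attained only when \<open>W\<gamma>\<close> is parallel to \<open>\<Omega>\<inverse>\<gamma>\<close>, and then
  \<open>\<lambda>(W) = \<lambda>(\<Omega>\<inverse>)\<close>. On the other hand \<open>\<lambda>(\<Omega>\<^sub>\<omega>\<inverse>) = \<omega>\<close> says exactly that \<open>\<beta>\<^sup>*(\<omega>)\<close> is a
  fixed point of \<open>T\<close>, hence equals \<open>\<beta>\<^sup>*\<^sub>E\<^sub>G\<^sub>M\<^sub>M\<close>, which forces \<open>\<omega> = \<lambda>\<^sup>E\<^sup>G\<^sup>M\<^sup>M\<close>.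
  Only positive definiteness of \<open>\<Omega>(\<beta>)\<close> and uniqueness of the fixed point are used.\<close>

lemma inner_symmetric_matrix_commute:
  fixes A :: "real^'n^'n"
  assumes "transpose A = A"
  shows "x \<bullet> (A *v y) = (A *v x) \<bullet> y"
proof -
  have "x \<bullet> (A *v y) = (transpose A *v x) \<bullet> y"
    by (simp add: dot_lmul_matrix[symmetric])
  with assms show ?thesis
    by simp
qed

lemma pos_def_invertible:
  fixes A :: "real^'n^'n"
  assumes "pos_def A"
  shows "invertible A"
proof -
  have "\<forall>x. A *v x = 0 \<longrightarrow> x = 0"
    using assms unfolding pos_def_def by (metis inner_zero_right less_irrefl)
  then obtain B where "B ** A = mat 1"
    using matrix_left_invertible_ker by blast
  then show ?thesis
    using invertible_left_inverse by blast
qed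

lemma
  fixes A :: "'a::semiring_1^'n^'m"
  assumes "invertible A"
  shows matrix_mul_matrix_inv: "A ** matrix_inv A = mat 1"
    and matrix_inv_matrix_mul: "matrix_inv A ** A = mat 1"
  using someI_ex[OF assms[unfolded invertible_def]] unfolding matrix_inv_def by auto

lemma pos_def_matrix_inv:
  fixes A :: "real^'n^'n"
  assumes pd: "pos_def A"
  shows "pos_def (matrix_inv A)"
  unfolding pos_def_def
proof (intro conjI allI impI)
  let ?B = "matrix_inv A"
  have inv: "invertible A"
    using pd by (rule pos_def_invertible)
  have tA: "transpose A = A"
    using pd unfolding pos_def_def by simp
  have left_inv: "transpose ?B ** A = mat 1"
    by (metis matrix_mul_matrix_inv[OF inv] matrix_transpose_mul tA transpose_mat)
  have "transpose ?B = transpose ?B ** (A ** ?B)"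
    by (simp add: matrix_mul_matrix_inv[OF inv] matrix_mul_rid)
  also have "\<dots> = ?B"
    by (metis left_inv matrix_mul_assoc matrix_mul_lid)
  finally show "transpose ?B = ?B" .
  fix x :: "real^'n"
  assume "x \<noteq> 0"
  let ?y = "?B *v x"
  have x: "x = A *v ?y"
    by (simp add: matrix_vector_mul_assoc matrix_mul_matrix_inv[OF inv])
  with \<open>x \<noteq> 0\<close> have "?y \<noteq> 0"
    by auto
  then have "?y \<bullet> (A *v ?y) > 0"
    using pd unfolding pos_def_def by blast
  then show "x \<bullet> (?B *v x) > 0"
    using x by (metis inner_commute)
qed

lemma Vasy_matrix_inv:
  fixes Q :: "real^'n^'n"
  assumes "invertible Q"
  shows "Vasy g (matrix_inv Q) Q = 1 / (g \<bullet> (matrix_inv Q *v g))"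
proof -
  have "matrix_inv Q ** Q ** matrix_inv Q = matrix_inv Q"
    using matrix_inv_matrix_mul[OF assms] by (simp add: matrix_mul_lid)
  then show ?thesis
    unfolding Vasy_def by (simp add: power2_eq_square)
qed

lemma pos_def_cauchy_schwarz_strict:
  fixes Q :: "real^'n^'n"
  assumes pd: "pos_def Q" and "b \<noteq> 0" and not_parallel: "\<And>t. a \<noteq> t *\<^sub>R b"
  shows "(a \<bullet> (Q *v b))\<^sup>2 < (a \<bullet> (Q *v a)) * (b \<bullet> (Q *v b))"
proof -
  define p where "p = a \<bullet> (Q *v b)"
  define q where "q = b \<bullet> (Q *v b)"
  define s where "s = a \<bullet> (Q *v a)"
  have q_pos: "q > 0"
    using pd \<open>b \<noteq> 0\<close> unfolding pos_def_def q_def by blast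
  have sym: "b \<bullet> (Q *v a) = p"
    using pd unfolding pos_def_def p_def by (metis inner_commute inner_symmetric_matrix_commute)
  have "a - (p / q) *\<^sub>R b \<noteq> 0"
    using not_parallel[of "p / q"] by auto
  then have "0 < (a - (p / q) *\<^sub>R b) \<bullet> (Q *v (a - (p / q) *\<^sub>R b))"
    using pd unfolding pos_def_def by blast
  also have "\<dots> = s - 2 * (p / q) * p + (p / q) * (p / q) * q"
    using sym unfolding s_def p_def q_def
    by (simp add: algebra_simps inner_diff_left inner_diff_right matrix_vector_mult_diff_distrib
        scaleR_matrix_vector_assoc[symmetric] matrix_scaleR_vector_ac[symmetric])
  also have "\<dots> = s - p\<^sup>2 / q"
    using q_pos by (simp add: field_simps power2_eq_square)
  finally show ?thesis
    using q_pos unfolding p_def q_def s_def by (simp add: field_simps)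
qed

lemma Vasy_gt_floor:
  fixes Q W :: "real^'n^'n"
  assumes pd: "pos_def Q" and tW: "transpose W = W" and nz: "g \<bullet> (W *v g) \<noteq> 0"
    and not_parallel: "\<And>t. W *v g \<noteq> t *\<^sub>R (matrix_inv Q *v g)"
  shows "Vasy g W Q > 1 / (g \<bullet> (matrix_inv Q *v g))"
proof -
  define a where "a = W *v g"
  define b where "b = matrix_inv Q *v g"
  have g: "g = Q *v b"
    unfolding b_def
    by (simp add: matrix_vector_mul_assoc matrix_mul_matrix_inv[OF pos_def_invertible[OF pd]])
  have "b \<noteq> 0"
    using g nz by auto
  have floor: "g \<bullet> (matrix_inv Q *v g) = b \<bullet> (Q *v b)"
    by (metis b_def g inner_commute)
  have num: "g \<bullet> ((W ** Q ** W) *v g) = a \<bullet> (Q *v a)"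
    unfolding a_def by (metis matrix_vector_mul_assoc inner_symmetric_matrix_commute tW)
  have den: "g \<bullet> (W *v g) = a \<bullet> (Q *v b)"
    unfolding a_def using g by (metis inner_commute inner_symmetric_matrix_commute tW)
  have "(a \<bullet> (Q *v b))\<^sup>2 < (a \<bullet> (Q *v a)) * (b \<bullet> (Q *v b))"
    using pos_def_cauchy_schwarz_strict[OF pd \<open>b \<noteq> 0\<close>] not_parallel unfolding a_def b_def
    by blast
  moreover have "b \<bullet> (Q *v b) > 0" "(a \<bullet> (Q *v b))\<^sup>2 > 0"
    using floor nz den pd \<open>b \<noteq> 0\<close> unfolding pos_def_def by auto
  ultimately show ?thesis
    unfolding Vasy_def num den floor by (simp add: divide_simps)
qed

lemma inner_matrix_vector_nonzero_if_lam_in_simplex: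
  assumes "lam g W \<in> prob_simplex"
  shows "g \<bullet> (W *v g) \<noteq> 0"
proof
  assume "g \<bullet> (W *v g) = 0"
  then have "lam g W = 0"
    unfolding lam_def by (simp add: vec_eq_iff)
  with assms show False
    unfolding prob_simplex_def by simp
qed

lemma lam_eq_if_parallel:
  assumes "W *v g = t *\<^sub>R (W' *v g)" and "g \<bullet> (W *v g) \<noteq> 0"
  shows "lam g W = lam g W'"
proof -
  have "t \<noteq> 0"
    using assms by auto
  then show ?thesis
    unfolding lam_def assms(1) by (simp add: vec_eq_iff)
qed

lemma Vasy_gt_floor_if_lam_ne:
  fixes Q W :: "real^'n^'n"
  assumes "pos_def Q" "pos_def W" "lam g W \<in> prob_simplex"
    and "lam g W \<noteq> lam g (matrix_inv Q)"
  shows "Vasy g W Q > 1 / (g \<bullet> (matrix_inv Q *v g))"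
proof (rule Vasy_gt_floor)
  show "g \<bullet> (W *v g) \<noteq> 0"
    using assms(3) by (rule inner_matrix_vector_nonzero_if_lam_in_simplex)
  then show "W *v g \<noteq> t *\<^sub>R (matrix_inv Q *v g)" for t
    using assms(4) lam_eq_if_parallel by blast
qed (use assms(1,2) in \<open>auto simp: pos_def_def\<close>)

lemma betastar_lam_eq_Tmap:
  "betastar wd (lam g (matrix_inv (Om b))) = Tmap g Om wd b"
  unfolding betastar_def Tmap_def by simp

lemma lam_eq_target_imp_fixed_point_weights:
  assumes unique: "\<forall>b. Tmap g Om wd b = b \<longrightarrow> b = bE"
    and "lam g (matrix_inv (Om (betastar wd w))) = w"
  shows "w = lam g (matrix_inv (Om bE))"
proof -
  have "Tmap g Om wd (betastar wd w) = betastar wd w"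
    using betastar_lam_eq_Tmap assms(2) by metis
  with unique assms(2) show ?thesis
    by metis
qed

theorem proposition8:
  fixes M :: "'a measure" and Y0 Y1 :: "'a \<Rightarrow> real"
    and Dc :: "'a \<Rightarrow> ('l::finite \<Rightarrow> bool) \<Rightarrow> bool"
    and Z :: "'a \<Rightarrow> 'l \<Rightarrow> bool" and bE :: real
  defines "gm \<equiv> gam M (Dobs Dc Z) Z"
    and "Om \<equiv> Omega M (Yobs Y0 Y1 Dc Z) (Dobs Dc Z) Z"
    and "Wd \<equiv> wald M (Yobs Y0 Y1 Dc Z) (Dobs Dc Z) Z"
    and "lamE \<equiv> lam (gam M (Dobs Dc Z) Z) (matrix_inv (Omega M (Yobs Y0 Y1 Dc Z) (Dobs Dc Z) Z bE))"
  assumes M: "prob_space M"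
    and L2: "CARD('l) \<ge> 2"
    and sqint0: "integrable M (\<lambda>x. (Y0 x)\<^sup>2)"
    and sqint1: "integrable M (\<lambda>x. (Y1 x)\<^sup>2)"
    and A1: "indep2 M
               (borel \<Otimes>\<^sub>M (borel \<Otimes>\<^sub>M count_space UNIV)) (\<lambda>x. (Y0 x, Y1 x, Dc x))
               (count_space UNIV :: ('l \<Rightarrow> bool) measure) Z"
    and A2: "\<forall>x\<in>space M. \<forall>z z'. (\<forall>l. z l \<longrightarrow> z' l) \<longrightarrow> Dc x z \<longrightarrow> Dc x z'"
    and A3p: "\<forall>l. pZ M Z l > 0"
    and A3pi: "\<forall>l. piZ M (Dobs Dc Z) Z l > 0"
    and A3S: "pos_def (SigZ M Z)"
    and Omega_pd: "\<forall>b. pos_def (Om b)"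
    and distinct: "inj Wd"
    and EGMM_fix: "Tmap gm Om Wd bE = bE"
    and EGMM_unique: "\<forall>b. Tmap gm Om Wd b = b \<longrightarrow> b = bE"
  shows "(\<forall>w\<in>prob_simplex. w \<noteq> lamE \<longrightarrow>
            Vasy gm (matrix_inv (Om (betastar Wd w))) (Om (betastar Wd w))
              = 1 / (gm \<bullet> (matrix_inv (Om (betastar Wd w)) *v gm))
          \<and> lam gm (matrix_inv (Om (betastar Wd w))) \<noteq> w
          \<and> (\<forall>W. pos_def W \<and> lam gm W = w \<longrightarrow>
                Vasy gm W (Om (betastar Wd w)) > 1 / (gm \<bullet> (matrix_inv (Om (betastar Wd w)) *v gm))))
     \<and> (\<forall>w\<in>prob_simplex.
            (\<exists>W. pos_def W \<and> lam gm W = w \<and>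
                 Vasy gm W (Om (betastar Wd w)) = 1 / (gm \<bullet> (matrix_inv (Om (betastar Wd w)) *v gm)))
            \<longleftrightarrow> w = lamE)"
proof -
  have lamE: "lamE = lam gm (matrix_inv (Om bE))"
    unfolding lamE_def gm_def Om_def ..
  have floor: "Vasy gm (matrix_inv (Om b)) (Om b) = 1 / (gm \<bullet> (matrix_inv (Om b) *v gm))" for b
    using Omega_pd Vasy_matrix_inv pos_def_invertible by blast
  have weights_missed: "lam gm (matrix_inv (Om (betastar Wd w))) \<noteq> w" if "w \<noteq> lamE" for w
    using lam_eq_target_imp_fixed_point_weights[OF EGMM_unique] lamE that by metis
  have above_floor: "Vasy gm W (Om (betastar Wd w)) > 1 / (gm \<bullet> (matrix_inv (Om (betastar Wd w)) *v gm))"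
    if "w \<in> prob_simplex" "w \<noteq> lamE" "pos_def W" "lam gm W = w" for w W
    using Vasy_gt_floor_if_lam_ne Omega_pd weights_missed that by metis
  have "betastar Wd lamE = bE"
    using betastar_lam_eq_Tmap EGMM_fix lamE by metis
  then have attained: "\<exists>W. pos_def W \<and> lam gm W = lamE \<and>
      Vasy gm W (Om (betastar Wd lamE)) = 1 / (gm \<bullet> (matrix_inv (Om (betastar Wd lamE)) *v gm))"
    using pos_def_matrix_inv Omega_pd floor lamE by metis
  show ?thesis
    using floor weights_missed above_floor attained by (metis less_irrefl)
qed

end
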